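(* Let $B$ be a ring with identity, $\rho$ an automorphism of $B$ and $D$ a $\rho$-derivation of $B$ such that $\rho D = D\rho$. Let $f = X^m + X^{m-1}a_{m-1} + \cdots + Xa_1 + a_0 \in B[X;\rho,D]_{(0)}$ with all coefficients $a_0,\dots,a_{m-1}$ in $B^\rho$, and put $a_m=1$. Then all $a_i$ lie in $C(B^{\rho,D})$, the center of $B^{\rho,D}$ (i.e. $f \in C(B^{\rho,D})[X]$). Moreover, for every $\alpha\in B$ and every $0 \le i \le m$, \[ \alpha a_i = \sum_{j=i}^{m} (-1)^{j-i}\binom{j}{i}\, a_j\, \rho^{m-j} D^{j-i}(\alpha). \]
   Context: All rings have an identity. A $\rho$-derivation of $B$ is an additive map $D: B\to B$ with $D(\alpha\beta) = D(\alpha)\beta + \rho(\alpha)D(\beta)$ for all $\alpha,\beta\in B$. $B[X;\rho,D]$ is the skew polynomial ring over $B$ (coefficients on the right) with multiplication determined by $\alpha X = X\rho(\alpha) + D(\alpha)$ for $\alpha\in B$. $B[X;\rho,D]_{(0)}$ is the set of monic $f\in B[X;\rho,D]$ with $fB[X;\rho,D] = B[X;\rho,D]f$. $B^\rho = \{\alpha\in B : \rho(\alpha)=\alpha\}$, $B^D = \{\alpha\in B : D(\alpha)=0\}$, $B^{\rho,D} = B^\rho\cap B^D$. *)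

theory Defs
  imports "HOL-Computational_Algebra.Polynomial"
begin

text \<open>Skew polynomials f = sum X^i a_i (coefficients on the right) are represented by
  their coefficient sequences, stored in the type 'a poly (only used as a container of
  finitely supported coefficients; coeff f i is the coefficient of X^i).
  The skew multiplication is determined by  alpha X = X rho(alpha) + D(alpha).\<close>

text \<open>skew_coef rho D n k alpha is the coefficient of X^k in alpha X^n, i.e.
  alpha X^n = sum_k X^k (skew_coef rho D n k alpha).\<close>
fun skew_coef :: "('a::ring_1 \<Rightarrow> 'a) \<Rightarrow> ('a \<Rightarrow> 'a) \<Rightarrow> nat \<Rightarrow> nat \<Rightarrow> 'a \<Rightarrow> 'a" where
  "skew_coef \<rho> D 0 k \<alpha> = (if k = 0 then \<alpha> else 0)"
| "skew_coef \<rho> D (Suc n) k \<alpha> =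
     (if k = 0 then 0 else skew_coef \<rho> D n (k - 1) (\<rho> \<alpha>)) + skew_coef \<rho> D n k (D \<alpha>)"

definition skew_mult :: "('a::ring_1 \<Rightarrow> 'a) \<Rightarrow> ('a \<Rightarrow> 'a) \<Rightarrow> 'a poly \<Rightarrow> 'a poly \<Rightarrow> 'a poly" where
  "skew_mult \<rho> D p q =
     (\<Sum>i\<le>degree p. \<Sum>j\<le>degree q. \<Sum>k\<le>j.
        monom (skew_coef \<rho> D j k (coeff p i) * coeff q j) (i + k))"

definition skew_invariant_monic :: "('a::ring_1 \<Rightarrow> 'a) \<Rightarrow> ('a \<Rightarrow> 'a) \<Rightarrow> 'a poly set" where
  "skew_invariant_monic \<rho> D =
     {f. coeff f (degree f) = 1 \<and>
         range (\<lambda>g. skew_mult \<rho> D f g) = range (\<lambda>g. skew_mult \<rho> D g f)}"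

definition ring_automorphism :: "('a::ring_1 \<Rightarrow> 'a) \<Rightarrow> bool" where
  "ring_automorphism \<rho> \<longleftrightarrow> bij \<rho> \<and> \<rho> 1 = 1 \<and>
     (\<forall>x y. \<rho> (x + y) = \<rho> x + \<rho> y) \<and> (\<forall>x y. \<rho> (x * y) = \<rho> x * \<rho> y)"

definition rho_derivation :: "('a::ring_1 \<Rightarrow> 'a) \<Rightarrow> ('a \<Rightarrow> 'a) \<Rightarrow> bool" where
  "rho_derivation \<rho> D \<longleftrightarrow> (\<forall>x y. D (x + y) = D x + D y) \<and>
     (\<forall>x y. D (x * y) = D x * y + \<rho> x * D y)"

definition fixed_const :: "('a::ring_1 \<Rightarrow> 'a) \<Rightarrow> ('a \<Rightarrow> 'a) \<Rightarrow> 'a set" where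
  "fixed_const \<rho> D = {a. \<rho> a = a \<and> D a = 0}"

definition center_of :: "'a::ring_1 set \<Rightarrow> 'a set" where
  "center_of S = {a \<in> S. \<forall>b\<in>S. a * b = b * a}"

end

theory Submission
  imports Defs
begin

text \<open>
  Let m = degree f and a_i = coeff f i. Comparing degrees in the skew product turns the
  invariance of f into alpha f = f rho^m(alpha) for every constant alpha, and into f X = g f with
  g of degree at most one; comparing coefficients in the latter and using rho(a_i) = a_i gives
  D(a_i) = 0. Since rho and D commute, alpha X^l = sum_k X^k (l choose k) rho^k D^(l-k)(alpha), so
  the coefficient of X^n in alpha f = f rho^m(alpha), taken at alpha = rho^(-n)(beta), reads
  a_n rho^(m-n)(beta) = sum_l (l choose n) D^(l-n)(beta) a_l.
  Binomial inversion solves this triangular system for beta a_i, which is the stated formula.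
  For beta in B^(rho,D) only its term j = i survives, so a_i commutes with beta.
\<close>

lemma funpow_fixpoint: "f x = x \<Longrightarrow> (f ^^ n) x = x"
  by (induction n) auto

lemma funpow_commute:
  assumes "\<And>x. f (g x) = g (f x)"
  shows "(f ^^ m) ((g ^^ n) x) = (g ^^ n) ((f ^^ m) x)"
proof -
  have "f ((g ^^ n) y) = (g ^^ n) (f y)" for y
    by (induction n) (auto simp: assms)
  then show ?thesis
    by (induction m) auto
qed

lemma sum_eq_single:
  assumes "finite S" "c \<in> S" "\<And>i. i \<in> S \<Longrightarrow> i \<noteq> c \<Longrightarrow> h i = 0"
  shows "sum h S = h c"
  using assms by (simp add: sum.remove sum.neutral)

lemma sum_alternating_choose_mult_choose:
  assumes "l \<le> m"
  shows "(\<Sum>j=i..m. (-1) ^ (j - i) * of_nat (j choose i) * of_nat (l choose j) :: int) =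
    (if l = i then 1 else 0)"
proof (cases "i \<le> l")
  case False
  then show ?thesis
    by (intro trans[OF sum.neutral]) auto
next
  case True
  have "(\<Sum>j=i..m. (-1) ^ (j - i) * of_nat (j choose i) * of_nat (l choose j) :: int) =
      (\<Sum>j=i..l. (-1) ^ (j - i) * of_nat (j choose i) * of_nat (l choose j))"
    using assms by (intro sum.mono_neutral_right) auto
  also have "\<dots> = (\<Sum>k\<le>l - i. (-1) ^ k * of_nat ((i + k) choose i) * of_nat (l choose (i + k)))"
    using True by (simp add: sum.atLeastAtMost_shift_0 atLeast0AtMost)
  also have "\<dots> = of_nat (l choose i) * (\<Sum>k\<le>l - i. (-1) ^ k * of_nat ((l - i) choose k))"
    unfolding sum_distrib_left
  proof (intro sum.cong refl)
    fix k assume "k \<in> {..l - i}"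
    then have "(l choose (i + k)) * ((i + k) choose i) = (l choose i) * ((l - i) choose k)"
      using True choose_mult[of i "i + k" l] by simp
    then show "(-1) ^ k * of_nat ((i + k) choose i) * of_nat (l choose (i + k)) =
        (of_nat (l choose i) * ((-1) ^ k * of_nat ((l - i) choose k)) :: int)"
      by (metis (mono_tags) mult.commute mult.left_commute of_nat_mult)
  qed
  also have "\<dots> = (if l = i then 1 else 0)"
    using True choose_alternating_sum[of "l - i", where 'a = int] by auto
  finally show ?thesis .
qed

lemma binomial_inversion:
  fixes b c :: "nat \<Rightarrow> 'a::ring_1"
  assumes b: "\<And>j. i \<le> j \<Longrightarrow> j \<le> m \<Longrightarrow> b j = (\<Sum>l\<le>m. of_nat (l choose j) * c l)"
    and "i \<le> m"
  shows "c i = (\<Sum>j=i..m. (-1) ^ (j - i) * of_nat (j choose i) * b j)"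
proof -
  have "(\<Sum>j=i..m. (-1) ^ (j - i) * of_nat (j choose i) * b j) =
      (\<Sum>j=i..m. \<Sum>l\<le>m.
        of_int ((-1) ^ (j - i) * of_nat (j choose i) * of_nat (l choose j)) * c l)"
    by (simp add: b sum_distrib_left mult.assoc)
  also have "\<dots> = (\<Sum>l\<le>m.
      of_int (\<Sum>j=i..m. (-1) ^ (j - i) * of_nat (j choose i) * of_nat (l choose j)) * c l)"
    by (subst sum.swap) (simp add: sum_distrib_right)
  also have "\<dots> = (\<Sum>l\<le>m. (if l = i then c l else 0))"
    by (intro sum.cong refl) (simp add: sum_alternating_choose_mult_choose)
  also have "\<dots> = c i"
    using \<open>i \<le> m\<close> by simp
  finally show ?thesis ..
qed

lemma skew_coef_eq_0: "n < k \<Longrightarrow> skew_coef \<rho> D n k \<alpha> = 0"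
  by (induction n arbitrary: k \<alpha>) auto

lemma skew_coef_diag: "skew_coef \<rho> D n n \<alpha> = (\<rho> ^^ n) \<alpha>"
  by (induction n arbitrary: \<alpha>) (auto simp: skew_coef_eq_0 funpow_swap1)

lemma skew_coef_0:
  assumes "\<rho> 0 = 0" "D 0 = 0"
  shows "skew_coef \<rho> D n k 0 = 0"
  by (induction n arbitrary: k) (auto simp: assms)

lemma skew_coef_closed_form:
  assumes "\<And>x. \<rho> (D x) = D (\<rho> x)"
  shows "skew_coef \<rho> D n k \<alpha> = of_nat (n choose k) * (\<rho> ^^ k) ((D ^^ (n - k)) \<alpha>)"
proof (induction n arbitrary: k \<alpha>)
  case 0
  then show ?case by (cases k) simp_all
next
  case (Suc n)
  show ?case
  proof (cases k)
    case 0
    then show ?thesis using Suc by (simp add: funpow_swap1)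
  next
    case (Suc k')
    have "(D ^^ j) (\<rho> x) = \<rho> ((D ^^ j) x)" for j x
      using funpow_commute[of D \<rho> j 1 x] assms by simp
    then have "(\<rho> ^^ k') ((D ^^ (n - k')) (\<rho> \<alpha>)) = (\<rho> ^^ k) ((D ^^ (Suc n - k)) \<alpha>)"
      using Suc by (simp add: funpow_swap1)
    moreover have "of_nat (n choose k) * (\<rho> ^^ k) ((D ^^ (n - k)) (D \<alpha>)) =
        of_nat (n choose k) * (\<rho> ^^ k) ((D ^^ (Suc n - k)) \<alpha>)"
      by (cases "k \<le> n") (simp_all add: Suc_diff_le funpow_swap1 binomial_eq_0)
    ultimately show ?thesis
      using Suc.IH[of k' "\<rho> \<alpha>"] Suc.IH[of k "D \<alpha>"] Suc by (simp add: distrib_right)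
  qed
qed

lemma coeff_skew_mult:
  assumes "\<rho> 0 = 0" "D 0 = 0" "degree q \<le> M"
  shows "coeff (skew_mult \<rho> D p q) n =
    (\<Sum>i\<le>n. \<Sum>j\<le>M. skew_coef \<rho> D j (n - i) (coeff p i) * coeff q j)"
proof -
  define F where "F i j = (if i \<le> n then skew_coef \<rho> D j (n - i) (coeff p i) * coeff q j else 0)"
    for i j
  have coeff_inner:
    "(\<Sum>k\<le>j. if i + k = n then skew_coef \<rho> D j k (coeff p i) * coeff q j else 0) = F i j" for i j
  proof (cases "i \<le> n \<and> n - i \<le> j")
    case True
    then show ?thesis
      by (subst sum_eq_single[of _ "n - i"]) (auto simp: F_def)
  qed (auto simp: F_def skew_coef_eq_0 intro!: sum.neutral)
  have "coeff (skew_mult \<rho> D p q) n = (\<Sum>i\<le>degree p. \<Sum>j\<le>degree q. F i j)"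
    unfolding skew_mult_def by (simp add: coeff_sum coeff_inner)
  also have "\<dots> = (\<Sum>i\<le>degree p + n. \<Sum>j\<le>M. F i j)"
  proof (rule sum.mono_neutral_cong_left)
    show "\<forall>i\<in>{..degree p + n} - {..degree p}. (\<Sum>j\<le>M. F i j) = 0"
    proof
      fix i assume "i \<in> {..degree p + n} - {..degree p}"
      then have "coeff p i = 0"
        by (simp add: coeff_eq_0)
      then show "(\<Sum>j\<le>M. F i j) = 0"
        by (simp add: F_def skew_coef_0 assms cong: if_cong)
    qed
    show "(\<Sum>j\<le>degree q. F i j) = (\<Sum>j\<le>M. F i j)" for i
      by (rule sum.mono_neutral_left) (auto simp: F_def coeff_eq_0 assms)
  qed auto
  also have "\<dots> = (\<Sum>i\<le>n. \<Sum>j\<le>M. F i j)"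
    by (rule sum.mono_neutral_right) (auto simp: F_def)
  finally show ?thesis
    by (simp add: F_def)
qed

lemma coeff_skew_mult_eq_0:
  assumes "\<rho> 0 = 0" "D 0 = 0" "degree p + degree q < n"
  shows "coeff (skew_mult \<rho> D p q) n = 0"
proof -
  have "skew_coef \<rho> D j (n - i) (coeff p i) = 0" if "j \<le> degree q" for i j
    using that assms by (cases "i \<le> degree p") (auto simp: skew_coef_eq_0 skew_coef_0 coeff_eq_0)
  then show ?thesis
    using assms by (simp add: coeff_skew_mult[of _ _ q "degree q"])
qed

lemma coeff_skew_mult_top:
  assumes "\<rho> 0 = 0" "D 0 = 0"
  shows "coeff (skew_mult \<rho> D p q) (degree p + degree q) =
    (\<rho> ^^ degree q) (lead_coeff p) * lead_coeff q"
proof -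
  have "coeff (skew_mult \<rho> D p q) (degree p + degree q) =
      (\<Sum>i\<le>degree p + degree q. \<Sum>j\<le>degree q.
        skew_coef \<rho> D j (degree p + degree q - i) (coeff p i) * coeff q j)"
    using assms by (rule coeff_skew_mult) simp
  also have "\<dots> = (\<Sum>j\<le>degree q. skew_coef \<rho> D j (degree q) (lead_coeff p) * coeff q j)"
    by (subst sum_eq_single[of _ "degree p"])
      (auto simp: assms skew_coef_eq_0 skew_coef_0 coeff_eq_0 nat_neq_iff intro!: sum.neutral)
  also have "\<dots> = skew_coef \<rho> D (degree q) (degree q) (lead_coeff p) * lead_coeff q"
    by (rule sum_eq_single) (auto simp: skew_coef_eq_0)
  finally show ?thesis
    by (simp add: skew_coef_diag)
qed

lemma degree_skew_mult_le:
  assumes "\<rho> 0 = 0" "D 0 = 0"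
  shows "degree (skew_mult \<rho> D p q) \<le> degree p + degree q"
  using assms by (intro degree_le) (simp add: coeff_skew_mult_eq_0)

lemma degree_skew_mult:
  assumes "\<rho> 0 = 0" "D 0 = 0" "(\<rho> ^^ degree q) (lead_coeff p) * lead_coeff q \<noteq> 0"
  shows "degree (skew_mult \<rho> D p q) = degree p + degree q"
  using assms by (intro antisym degree_skew_mult_le le_degree) (simp_all add: coeff_skew_mult_top)

lemma coeff_skew_mult_const_left:
  assumes "\<rho> 0 = 0" "D 0 = 0"
  shows "coeff (skew_mult \<rho> D [:\<alpha>:] q) n = (\<Sum>j\<le>degree q. skew_coef \<rho> D j n \<alpha> * coeff q j)"
  using assms
  by (simp add: coeff_skew_mult[of _ _ q "degree q"] sum_eq_single[of _ 0] coeff_pCons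
      skew_coef_0 split: nat.split)

lemma coeff_skew_mult_const_right:
  assumes "\<rho> 0 = 0" "D 0 = 0"
  shows "coeff (skew_mult \<rho> D p [:c:]) n = coeff p n * c"
  using assms by (simp add: coeff_skew_mult[of _ _ "[:c:]" 0] sum_eq_single[of _ n])

lemma coeff_skew_mult_X_right:
  assumes "\<rho> 0 = 0" "D 0 = 0"
  shows "coeff (skew_mult \<rho> D p [:0, 1:]) n =
    D (coeff p n) + (if n = 0 then 0 else \<rho> (coeff p (n - 1)))"
  using assms
  by (cases n) (simp_all add: coeff_skew_mult[of _ _ "[:0, 1:]" 1] numeral_2_eq_2)

locale skew_polynomial_ring =
  fixes \<rho> D :: "'a::ring_1 \<Rightarrow> 'a"
  assumes automorphism: "ring_automorphism \<rho>"
    and derivation: "rho_derivation \<rho> D"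
begin

lemma rho_0: "\<rho> 0 = 0"
proof -
  have "\<rho> (0 + 0) = \<rho> 0 + \<rho> 0"
    using automorphism unfolding ring_automorphism_def by blast
  then show ?thesis
    by simp
qed

lemma rho_1: "\<rho> 1 = 1"
  using automorphism unfolding ring_automorphism_def by blast

lemma D_0: "D 0 = 0"
proof -
  have "D (0 + 0) = D 0 + D 0"
    using derivation unfolding rho_derivation_def by blast
  then show ?thesis
    by simp
qed

lemma D_1: "D 1 = 0"
proof -
  have "D (1 * 1) = D 1 * 1 + \<rho> 1 * D 1"
    using derivation unfolding rho_derivation_def by blast
  then show ?thesis
    by (simp add: rho_1)
qed

lemma rho_pow_0: "(\<rho> ^^ n) 0 = 0"
  by (rule funpow_fixpoint) (rule rho_0)

lemma rho_pow_1: "(\<rho> ^^ n) 1 = 1"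
  by (rule funpow_fixpoint) (rule rho_1)

lemma bij_rho_pow: "bij (\<rho> ^^ n)"
  using automorphism unfolding ring_automorphism_def by simp

lemma rho_pow_eq_0_iff: "(\<rho> ^^ n) x = 0 \<longleftrightarrow> x = 0"
  using bij_rho_pow[of n] rho_pow_0 by (metis bij_is_inj injD)

lemma skew_invariant_monicD:
  assumes "f \<in> skew_invariant_monic \<rho> D"
  shows "lead_coeff f = 1" "range (skew_mult \<rho> D f) = range (\<lambda>g. skew_mult \<rho> D g f)"
  using assms unfolding skew_invariant_monic_def by auto

lemma skew_invariant_monic_const_left:
  assumes "f \<in> skew_invariant_monic \<rho> D"
  shows "skew_mult \<rho> D [:\<alpha>:] f = skew_mult \<rho> D f [:(\<rho> ^^ degree f) \<alpha>:]"
proof -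
  note monic = skew_invariant_monicD[OF assms]
  have "skew_mult \<rho> D [:\<alpha>:] f \<in> range (skew_mult \<rho> D f)"
    unfolding monic(2) by (rule rangeI)
  then obtain g where g: "skew_mult \<rho> D [:\<alpha>:] f = skew_mult \<rho> D f g"
    by blast
  have "degree g = 0"
  proof (rule ccontr)
    assume "degree g \<noteq> 0"
    then have "degree (skew_mult \<rho> D f g) = degree f + degree g"
      by (intro degree_skew_mult) (auto simp: rho_0 D_0 monic rho_pow_1)
    moreover have "degree (skew_mult \<rho> D [:\<alpha>:] f) \<le> degree f"
      using degree_skew_mult_le[of \<rho> D "[:\<alpha>:]" f] by (simp add: rho_0 D_0)
    ultimately show False
      using g \<open>degree g \<noteq> 0\<close> by simp
  qed
  then obtain c where c: "g = [:c:]"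
    by (metis degree_0_id)
  have "(\<rho> ^^ degree f) \<alpha> = coeff (skew_mult \<rho> D [:\<alpha>:] f) (degree f)"
    using coeff_skew_mult_top[of \<rho> D "[:\<alpha>:]" f] by (simp add: rho_0 D_0 monic)
  also have "\<dots> = coeff (skew_mult \<rho> D f [:c:]) (degree f)"
    by (simp add: g c)
  also have "\<dots> = c"
    by (simp add: coeff_skew_mult_const_right rho_0 D_0 monic)
  finally show ?thesis
    by (simp add: g c)
qed

lemma coeff_skew_mult_skew_invariant_monic:
  assumes "f \<in> skew_invariant_monic \<rho> D"
  shows "coeff (skew_mult \<rho> D g f) n = (\<Sum>i\<le>n. coeff f (n - i) * (\<rho> ^^ degree f) (coeff g i))"
proof -
  have "(\<Sum>j\<le>degree f. skew_coef \<rho> D j k \<beta> * coeff f j) = coeff f k * (\<rho> ^^ degree f) \<beta>"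
    for k \<beta>
    using coeff_skew_mult_const_left[of \<rho> D \<beta> f k] coeff_skew_mult_const_right[of \<rho> D f]
    by (simp add: skew_invariant_monic_const_left[OF assms] rho_0 D_0)
  then show ?thesis
    by (simp add: coeff_skew_mult[of _ _ f "degree f"] rho_0 D_0)
qed

lemma skew_invariant_monic_mult_X:
  assumes f: "f \<in> skew_invariant_monic \<rho> D"
  obtains c\<^sub>0 c\<^sub>1 where "\<And>n. coeff (skew_mult \<rho> D f [:0, 1:]) n =
    coeff f n * c\<^sub>0 + (if n = 0 then 0 else coeff f (n - 1) * c\<^sub>1)"
proof -
  note monic = skew_invariant_monicD[OF f]
  have "skew_mult \<rho> D f [:0, 1:] \<in> range (\<lambda>g. skew_mult \<rho> D g f)"
    unfolding monic(2)[symmetric] by (rule rangeI)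
  then obtain g where g: "skew_mult \<rho> D f [:0, 1:] = skew_mult \<rho> D g f"
    by blast
  have "degree g \<le> 1"
  proof (cases "g = 0")
    case False
    then have "degree (skew_mult \<rho> D g f) = degree g + degree f"
      by (intro degree_skew_mult) (simp_all add: rho_0 D_0 monic rho_pow_eq_0_iff)
    moreover have "degree (skew_mult \<rho> D f [:0, 1:]) \<le> degree f + 1"
      using degree_skew_mult_le[of \<rho> D f "[:0, 1:]"] by (simp add: rho_0 D_0)
    ultimately show ?thesis
      using g by simp
  qed simp
  define c where "c i = (\<rho> ^^ degree f) (coeff g i)" for i
  have c_eq_0: "c i = 0" if "1 < i" for i
    using that \<open>degree g \<le> 1\<close> by (simp add: c_def coeff_eq_0 rho_pow_0)
  have "coeff (skew_mult \<rho> D f [:0, 1:]) n =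
      coeff f n * c 0 + (if n = 0 then 0 else coeff f (n - 1) * c 1)" for n
  proof (cases n)
    case (Suc k)
    have "coeff (skew_mult \<rho> D g f) n = (\<Sum>i\<le>Suc k. coeff f (Suc k - i) * c i)"
      by (simp add: coeff_skew_mult_skew_invariant_monic[OF f] c_def Suc)
    also have "\<dots> = coeff f (Suc k) * c 0 + (\<Sum>i\<le>k. coeff f (k - i) * c (Suc i))"
      by (subst sum.atMost_Suc_shift) simp
    also have "(\<Sum>i\<le>k. coeff f (k - i) * c (Suc i)) = coeff f k * c 1"
      by (subst sum_eq_single[of _ 0]) (auto simp: c_eq_0)
    finally show ?thesis
      using Suc g by simp
  qed (simp add: g coeff_skew_mult_skew_invariant_monic[OF f] c_def)
  then show ?thesis
    using that by blast
qed

lemma D_coeff_skew_invariant_monic: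
  assumes f: "f \<in> skew_invariant_monic \<rho> D"
    and fixed: "\<forall>i < degree f. \<rho> (coeff f i) = coeff f i"
  shows "D (coeff f n) = 0"
proof -
  note monic = skew_invariant_monicD(1)[OF f]
  obtain c\<^sub>0 c\<^sub>1 where fX: "\<And>n. coeff (skew_mult \<rho> D f [:0, 1:]) n =
      coeff f n * c\<^sub>0 + (if n = 0 then 0 else coeff f (n - 1) * c\<^sub>1)"
    using skew_invariant_monic_mult_X[OF f] by blast
  have fX': "coeff (skew_mult \<rho> D f [:0, 1:]) n =
      D (coeff f n) + (if n = 0 then 0 else \<rho> (coeff f (n - 1)))" for n
    by (simp add: coeff_skew_mult_X_right rho_0 D_0)
  have c\<^sub>1: "c\<^sub>1 = 1"
    using fX[of "Suc (degree f)"] fX'[of "Suc (degree f)"] by (simp add: monic rho_1 D_0 coeff_eq_0)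
  have c\<^sub>0: "c\<^sub>0 = 0"
  proof (cases "degree f")
    case 0
    then have "coeff f 0 = 1"
      using monic by simp
    then show ?thesis
      using fX[of 0] fX'[of 0] by (simp add: D_1)
  next
    case (Suc k)
    then have "coeff f (Suc k) = 1"
      using monic by simp
    then show ?thesis
      using c\<^sub>1 fixed Suc fX[of "Suc k"] fX'[of "Suc k"] by (simp add: D_1)
  qed
  show ?thesis
  proof (cases "n \<le> degree f")
    case True
    have "D (coeff f n) + (if n = 0 then 0 else \<rho> (coeff f (n - 1))) =
        (if n = 0 then 0 else coeff f (n - 1))"
      using c\<^sub>0 c\<^sub>1 fX[of n] fX'[of n] by (simp split: if_splits)
    moreover have "\<rho> (coeff f (n - 1)) = coeff f (n - 1)" if "n \<noteq> 0"
      using fixed True that by simp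
    ultimately show ?thesis
      by (cases "n = 0") simp_all
  qed (simp add: coeff_eq_0 D_0)
qed

lemma skew_invariant_monic_coeff_mult_rho_pow:
  assumes comm: "\<rho> \<circ> D = D \<circ> \<rho>"
    and f: "f \<in> skew_invariant_monic \<rho> D"
    and "n \<le> degree f"
  shows "coeff f n * (\<rho> ^^ (degree f - n)) \<beta> =
    (\<Sum>l\<le>degree f. of_nat (l choose n) * ((D ^^ (l - n)) \<beta> * coeff f l))"
proof -
  have comm': "\<rho> (D x) = D (\<rho> x)" for x
    using fun_cong[OF comm] by simp
  obtain \<alpha> where \<beta>: "\<beta> = (\<rho> ^^ n) \<alpha>"
    using bij_rho_pow by (metis bij_pointE)
  have "(\<rho> ^^ degree f) \<alpha> = (\<rho> ^^ (degree f - n)) \<beta>"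
    using \<open>n \<le> degree f\<close> funpow_add[of "degree f - n" n \<rho>] by (simp add: \<beta>)
  then have "coeff f n * (\<rho> ^^ (degree f - n)) \<beta> = coeff (skew_mult \<rho> D [:\<alpha>:] f) n"
    by (simp add: skew_invariant_monic_const_left[OF f] coeff_skew_mult_const_right rho_0 D_0)
  also have "\<dots> = (\<Sum>l\<le>degree f. skew_coef \<rho> D l n \<alpha> * coeff f l)"
    by (simp add: coeff_skew_mult_const_left rho_0 D_0)
  also have "\<dots> = (\<Sum>l\<le>degree f. of_nat (l choose n) * ((D ^^ (l - n)) \<beta> * coeff f l))"
    by (simp add: skew_coef_closed_form[of \<rho> D, OF comm'] funpow_commute[of \<rho> D, OF comm']
        \<beta> mult.assoc)
  finally show ?thesis .
qed

lemma mult_coeff_skew_invariant_monic: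
  assumes comm: "\<rho> \<circ> D = D \<circ> \<rho>"
    and f: "f \<in> skew_invariant_monic \<rho> D"
    and "i \<le> degree f"
  shows "\<alpha> * coeff f i =
    (\<Sum>j = i..degree f. (-1) ^ (j - i) * of_nat (j choose i) * coeff f j *
      (\<rho> ^^ (degree f - j)) ((D ^^ (j - i)) \<alpha>))"
proof -
  have "coeff f j * (\<rho> ^^ (degree f - j)) ((D ^^ (j - i)) \<alpha>) =
      (\<Sum>l\<le>degree f. of_nat (l choose j) * ((D ^^ (l - i)) \<alpha> * coeff f l))"
    if "i \<le> j" "j \<le> degree f" for j
    unfolding skew_invariant_monic_coeff_mult_rho_pow[OF comm f \<open>j \<le> degree f\<close>]
  proof (intro sum.cong refl)
    fix l
    show "of_nat (l choose j) * ((D ^^ (l - j)) ((D ^^ (j - i)) \<alpha>) * coeff f l) =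
        of_nat (l choose j) * ((D ^^ (l - i)) \<alpha> * coeff f l)"
      using \<open>i \<le> j\<close> funpow_add[of "l - j" "j - i" D]
      by (cases "j \<le> l") (simp_all add: binomial_eq_0)
  qed
  from binomial_inversion[where c = "\<lambda>l. (D ^^ (l - i)) \<alpha> * coeff f l", OF this \<open>i \<le> degree f\<close>]
  show ?thesis
    by (simp add: mult.assoc)
qed

lemma coeff_skew_invariant_monic_in_center:
  assumes comm: "\<rho> \<circ> D = D \<circ> \<rho>"
    and f: "f \<in> skew_invariant_monic \<rho> D"
    and fixed: "\<forall>i < degree f. \<rho> (coeff f i) = coeff f i"
    and "i \<le> degree f"
  shows "coeff f i \<in> center_of (fixed_const \<rho> D)"
proof -
  have "\<rho> (coeff f i) = coeff f i"
    using fixed \<open>i \<le> degree f\<close> skew_invariant_monicD(1)[OF f] rho_1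
    by (cases "i = degree f") auto
  moreover have "D (coeff f i) = 0"
    using D_coeff_skew_invariant_monic[OF f fixed] .
  moreover have "a * coeff f i = coeff f i * a" if "\<rho> a = a" "D a = 0" for a
  proof -
    have "(D ^^ Suc k) a = 0" for k
      using \<open>D a = 0\<close> by (simp add: funpow_swap1 funpow_fixpoint D_0)
    then have "(D ^^ k) a = 0" if "0 < k" for k
      using that by (metis gr0_implies_Suc)
    then show ?thesis
      unfolding mult_coeff_skew_invariant_monic[OF comm f \<open>i \<le> degree f\<close>]
      using \<open>i \<le> degree f\<close> \<open>\<rho> a = a\<close>
      by (subst sum_eq_single[of _ i]) (auto simp: funpow_fixpoint rho_pow_0)
  qed
  ultimately show ?thesis
    by (auto simp: center_of_def fixed_const_def)
qed

end

theorem corollary1p7: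
  fixes \<rho> D :: "'a::ring_1 \<Rightarrow> 'a" and f :: "'a poly"
  assumes "ring_automorphism \<rho>"
    and "rho_derivation \<rho> D"
    and "\<rho> \<circ> D = D \<circ> \<rho>"
    and "f \<in> skew_invariant_monic \<rho> D"
    and "\<forall>i < degree f. \<rho> (coeff f i) = coeff f i"
  shows "(\<forall>i \<le> degree f. coeff f i \<in> center_of (fixed_const \<rho> D)) \<and>
         (\<forall>\<alpha> i. i \<le> degree f \<longrightarrow>
            \<alpha> * coeff f i =
              (\<Sum>j = i..degree f. (-1) ^ (j - i) * of_nat (j choose i) * coeff f j *
                 (\<rho> ^^ (degree f - j)) ((D ^^ (j - i)) \<alpha>)))"
proof -
  interpret skew_polynomial_ring \<rho> D
    using assms(1,2) by unfold_locales
  show ?thesis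
    using coeff_skew_invariant_monic_in_center[OF assms(3-5)]
      mult_coeff_skew_invariant_monic[OF assms(3,4)] by blast
qed

end
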